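(* Let $A,B\in\mathbb{Z}$ with $4A^3+27B^2\ne0$, let $M$ be a positive integer with $\max\{10\sqrt{|A|},5\sqrt[3]{|B|}\}\le M$, let $D$ be a squarefree positive integer and $E_D: y^2=x^3+D^2Ax+D^3B$. Let $P,Q$ be points of $E_D$ with integer coordinates satisfying $MD\le x(P)<x(Q)$. Then \[h(P+Q)\le h(P)+2h(Q)+2.9.\]
   Context: $h$ is the absolute logarithmic Weil height on $\overline{\mathbb{Q}}$, and for a point $P$ on $E_D$, $h(P)=h(x(P))$. *)

theory Defs
  imports Complex_Main "HOL-Computational_Algebra.Squarefree"
begin

text \<open>Points of a short Weierstrass curve y^2 = x^3 + a x + b over Q:
  None is the point at infinity, Some (x, y) an affine point.\<close>
type_synonym ec_point = "(rat \<times> rat) option"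

definition on_curve :: "rat \<Rightarrow> rat \<Rightarrow> ec_point \<Rightarrow> bool" where
  "on_curve a b P = (case P of None \<Rightarrow> True
     | Some (x, y) \<Rightarrow> y^2 = x^3 + a * x + b)"

definition ec_add :: "rat \<Rightarrow> rat \<Rightarrow> ec_point \<Rightarrow> ec_point \<Rightarrow> ec_point" where
  "ec_add a b P Q = (case P of None \<Rightarrow> Q | Some (x1, y1) \<Rightarrow>
     (case Q of None \<Rightarrow> P | Some (x2, y2) \<Rightarrow>
       (if x1 = x2 \<and> y1 = - y2 then None
        else (let l = (if x1 = x2 then (3 * x1^2 + a) / (2 * y1)
                       else (y2 - y1) / (x2 - x1));
                  x3 = l^2 - x1 - x2
              in Some (x3, l * (x1 - x3) - y1)))))"

definition rat_height :: "rat \<Rightarrow> real" where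
  "rat_height r = (case quotient_of r of (p, q) \<Rightarrow> ln (real_of_int (max \<bar>p\<bar> \<bar>q\<bar>)))"

definition ec_height :: "ec_point \<Rightarrow> real" where
  "ec_height P = (case P of None \<Rightarrow> 0 | Some (x, y) \<Rightarrow> rat_height x)"

end

theory Submission
  imports Defs
begin

(* For integral points with 0 < x1 < x2, the chord through them meets the curve again at
   x-coordinate N / d with d = (x2 - x1)^2, where on the curve
   N = x1 x2 (x1 + x2) + a (x1 + x2) + 2 b - 2 y1 y2.
   The hypothesis M D <= x1 gives |a| <= x1^2/100 and |b| <= x1^3/125, hence y^2 <= 1.018 x^3
   at both points, so both N and the denominator are bounded by 5 x1 x2^2 in absolute value.
   Since the height of N/d is at most log max(|N|, d), this yields h(P + Q) <= log 5 + h(P) + 2 h(Q),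
   and log 5 < 2.9. *)

lemma rat_height_of_int:
  fixes n :: int
  assumes "n \<noteq> 0"
  shows "rat_height (of_int n) = ln \<bar>n\<bar>"
  using assms by (simp add: rat_height_def)

lemma rat_height_frac_le:
  fixes n d :: int
  assumes "d > 0"
  shows "rat_height (of_int n / of_int d) \<le> ln (max \<bar>n\<bar> d)"
proof -
  obtain p q where pq: "quotient_of (of_int n / of_int d) = (p, q)"
    by (cases "quotient_of (of_int n / of_int d)") auto
  have q0: "q > 0" and cop: "coprime p q"
    using quotient_of_denom_pos[OF pq] quotient_of_coprime[OF pq] .
  have "(of_int p :: rat) / of_int q = of_int n / of_int d"
    using quotient_of_div[OF pq] by simp
  then have eq: "p * d = n * q"
    using q0 assms by (simp add: frac_eq_eq) (metis of_int_eq_iff of_int_mult)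
  have "q dvd d"
    using eq cop by (metis coprime_commute coprime_dvd_mult_right_iff dvd_triv_right)
  then have "q \<le> d" using assms by (simp add: zdvd_imp_le)
  moreover have "\<bar>p\<bar> \<le> \<bar>n\<bar>"
  proof (cases "n = 0")
    case False
    have "p dvd n" using eq cop by (metis coprime_dvd_mult_left_iff dvd_triv_left)
    with False show ?thesis by (simp add: dvd_imp_le_int)
  qed (use eq q0 assms in simp)
  ultimately show ?thesis
    using q0 by (simp add: rat_height_def pq) (simp add: max_def)
qed

lemma on_curve_of_int_iff:
  fixes a b x y :: int
  shows "on_curve (of_int a) (of_int b) (Some (of_int x, of_int y)) \<longleftrightarrow> y^2 = x^3 + a * x + b"
proof -
  have "on_curve (of_int a) (of_int b) (Some (of_int x, of_int y))
    \<longleftrightarrow> (of_int (y^2) :: rat) = of_int (x^3 + a * x + b)"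
    by (simp add: on_curve_def)
  then show ?thesis by (simp only: of_int_eq_iff)
qed

lemma ec_height_add_distinct_x:
  assumes "x1 \<noteq> x2"
  shows "ec_height (ec_add a b (Some (x1, y1)) (Some (x2, y2)))
    = rat_height (((y2 - y1) / (x2 - x1))^2 - x1 - x2)"
  using assms by (simp add: ec_add_def ec_height_def Let_def)

lemma chord_x_of_int:
  fixes x1 x2 y1 y2 :: int
  assumes "x1 \<noteq> x2"
  shows "((of_int y2 - of_int y1) / (of_int x2 - of_int x1))^2 - of_int x1 - of_int x2
    = (of_int ((y2 - y1)^2 - (x1 + x2) * (x2 - x1)^2) / of_int ((x2 - x1)^2) :: rat)"
  using assms by (simp add: field_simps)

lemma chord_numerator_on_curve:
  fixes a b x1 x2 y1 y2 :: "'a::comm_ring_1"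
  assumes "y1^2 = x1^3 + a * x1 + b" "y2^2 = x2^3 + a * x2 + b"
  shows "(y2 - y1)^2 - (x1 + x2) * (x2 - x1)^2
    = x1 * x2 * (x1 + x2) + a * (x1 + x2) + 2 * b - 2 * (y1 * y2)"
proof -
  have "(y2 - y1)^2 = y2^2 + y1^2 - 2 * (y1 * y2)"
    by (simp add: power2_eq_square algebra_simps)
  also have "\<dots> = x2^3 + a * x2 + b + (x1^3 + a * x1 + b) - 2 * (y1 * y2)"
    by (simp only: assms)
  finally show ?thesis
    by (simp add: power2_eq_square power3_eq_cube algebra_simps)
qed

lemma y_squared_bound:
  fixes a b x y :: "'a::linordered_idom"
  assumes "0 < x" "100 * \<bar>a\<bar> \<le> x^2" "125 * \<bar>b\<bar> \<le> x^3" "y^2 = x^3 + a * x + b"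
  shows "1000 * y^2 \<le> 1018 * x^3"
proof -
  have "100 * \<bar>a * x\<bar> \<le> x^3"
    using mult_right_mono[OF assms(2), of x] assms(1)
    by (simp add: abs_mult power2_eq_square power3_eq_cube mult.assoc)
  moreover have "a * x \<le> \<bar>a * x\<bar>" "b \<le> \<bar>b\<bar>" by simp_all
  ultimately show ?thesis using assms(3,4) by linarith
qed

lemma abs_mult_y_bound:
  fixes x1 x2 y1 y2 :: "'a::linordered_idom"
  assumes "0 < x1" "x1 \<le> x2" "1000 * y1^2 \<le> 1018 * x1^3" "1000 * y2^2 \<le> 1018 * x2^3"
  shows "1000 * \<bar>y1 * y2\<bar> \<le> 1018 * (x1 * x2^2)"
proof -
  have "(1000 * (y1 * y2))^2 = (1000 * y1^2) * (1000 * y2^2)"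
    by (simp add: power_mult_distrib power2_eq_square)
  also have "\<dots> \<le> (1018 * x1^3) * (1018 * x2^3)"
    using assms by (rule_tac mult_mono) auto
  also have "\<dots> = 1018^2 * (x1^2 * x2^2) * (x1 * x2)"
    by (simp add: power2_eq_square power3_eq_cube algebra_simps)
  also have "\<dots> \<le> 1018^2 * (x1^2 * x2^2) * (x2 * x2)"
    using assms(1,2) by (intro mult_left_mono mult_right_mono) auto
  also have "\<dots> = (1018 * (x1 * x2^2))^2"
    by (simp add: power2_eq_square algebra_simps)
  finally have "\<bar>1000 * (y1 * y2)\<bar> \<le> \<bar>1018 * (x1 * x2^2)\<bar>"
    by (simp only: abs_le_square_iff)
  then show ?thesis
    using assms(1) by (simp add: abs_mult)
qed

lemma chord_numerator_bound:
  fixes a b x1 x2 y1 y2 :: "'a::linordered_idom"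
  assumes "0 < x1" "x1 \<le> x2" "100 * \<bar>a\<bar> \<le> x1^2" "125 * \<bar>b\<bar> \<le> x1^3"
    and "y1^2 = x1^3 + a * x1 + b" "y2^2 = x2^3 + a * x2 + b"
  shows "\<bar>x1 * x2 * (x1 + x2) + a * (x1 + x2) + 2 * b - 2 * (y1 * y2)\<bar> \<le> 5 * (x1 * x2^2)"
proof -
  have x1x2: "x1^2 \<le> x1 * x2"
    using assms(1,2) by (simp add: power2_eq_square)
  have x1x2_cube: "x1^3 \<le> x1 * x2^2"
    using assms(1,2) by (simp add: power3_eq_cube power2_eq_square mult_mono)
  have "1000 * \<bar>y1 * y2\<bar> \<le> 1018 * (x1 * x2^2)"
  proof (rule abs_mult_y_bound[OF assms(1,2)])
    show "1000 * y1^2 \<le> 1018 * x1^3"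
      using assms(1,3-5) by (rule y_squared_bound)
    have "x1^2 \<le> x2^2" "x1^3 \<le> x2^3"
      using assms(1,2) by (simp_all add: power_mono)
    then have "100 * \<bar>a\<bar> \<le> x2^2" "125 * \<bar>b\<bar> \<le> x2^3"
      using assms(3,4) by simp_all
    then show "1000 * y2^2 \<le> 1018 * x2^3"
      using assms(1,2,6) by (intro y_squared_bound) auto
  qed
  moreover have "x1 * x2 * (x1 + x2) \<le> 2 * (x1 * x2^2)"
    using assms(1,2) by (simp add: power2_eq_square algebra_simps mult_left_mono)
  moreover have "100 * \<bar>a * (x1 + x2)\<bar> \<le> 2 * (x1 * x2^2)"
  proof -
    have "100 * \<bar>a * (x1 + x2)\<bar> = (100 * \<bar>a\<bar>) * (x1 + x2)"
      using assms(1,2) by (simp add: abs_mult)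
    also have "\<dots> \<le> (x1 * x2) * (2 * x2)"
      using assms(1,2,3) x1x2 by (rule_tac mult_mono) auto
    finally show ?thesis by (simp add: power2_eq_square algebra_simps)
  qed
  moreover have "0 \<le> x1 * x2 * (x1 + x2)"
    using assms(1,2) by simp
  \<comment> \<open>In units of x1 x2^2 the four terms are at most 2, 1/50, 2/125 and 2.036 in absolute value.\<close>
  ultimately show ?thesis
    using assms(4) x1x2_cube by (simp add: abs_le_iff) linarith
qed

lemma ec_height_add_int_points_le:
  fixes a b x1 y1 x2 y2 :: int
  assumes "0 < x1" "x1 < x2" "100 * \<bar>a\<bar> \<le> x1^2" "125 * \<bar>b\<bar> \<le> x1^3"
    and "on_curve (of_int a) (of_int b) (Some (of_int x1, of_int y1))"
    and "on_curve (of_int a) (of_int b) (Some (of_int x2, of_int y2))"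
  shows "ec_height (ec_add (of_int a) (of_int b) (Some (of_int x1, of_int y1)) (Some (of_int x2, of_int y2)))
    \<le> ln 5 + ec_height (Some (of_int x1, of_int y1)) + 2 * ec_height (Some (of_int x2, of_int y2))"
proof -
  have curve: "y1^2 = x1^3 + a * x1 + b" "y2^2 = x2^3 + a * x2 + b"
    using assms(5,6) by (simp_all only: on_curve_of_int_iff)
  define N where "N = (y2 - y1)^2 - (x1 + x2) * (x2 - x1)^2"
  define d where "d = (x2 - x1)^2"
  have "d > 0" using assms(2) by (simp add: d_def)
  have "\<bar>N\<bar> \<le> 5 * (x1 * x2^2)"
    unfolding N_def chord_numerator_on_curve[OF curve]
    using assms(1-4) curve by (intro chord_numerator_bound) auto
  moreover have "d \<le> x1 * x2^2"
  proof -
    have "d \<le> x2^2" unfolding d_def using assms(1,2) by (intro power_mono) auto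
    also have "\<dots> \<le> x1 * x2^2" using assms(1) mult_right_mono[of 1 x1 "x2^2"] by simp
    finally show ?thesis .
  qed
  ultimately have max_le: "max \<bar>N\<bar> d \<le> 5 * (x1 * x2^2)"
    using assms(1) by simp
  have "ec_height (ec_add (of_int a) (of_int b) (Some (of_int x1, of_int y1)) (Some (of_int x2, of_int y2)))
      = rat_height (of_int N / of_int d)"
    using assms(2) by (simp add: ec_height_add_distinct_x chord_x_of_int N_def d_def)
  also have "\<dots> \<le> ln (max \<bar>N\<bar> d)"
    using \<open>d > 0\<close> by (rule rat_height_frac_le)
  also have "\<dots> \<le> ln (real_of_int (5 * (x1 * x2^2)))"
    using max_le \<open>d > 0\<close> by (intro ln_mono) ((simp only: of_int_le_iff), simp)
  also have "\<dots> = ln 5 + ln x1 + 2 * ln x2"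
    using assms(1,2) by (simp add: ln_mult ln_realpow)
  also have "\<dots> = ln 5 + ec_height (Some (of_int x1, of_int y1)) + 2 * ec_height (Some (of_int x2, of_int y2))"
    using assms(1,2) by (simp add: ec_height_def rat_height_of_int)
  finally show ?thesis .
qed

lemma coeff_bounds_of_max_root_le:
  fixes A B M :: int
  assumes "max (10 * sqrt \<bar>real_of_int A\<bar>) (5 * root 3 \<bar>real_of_int B\<bar>) \<le> real_of_int M"
  shows "100 * \<bar>A\<bar> \<le> M^2" and "125 * \<bar>B\<bar> \<le> M^3"
proof -
  have "(10 * sqrt \<bar>real_of_int A\<bar>)^2 \<le> (real_of_int M)^2"
    using assms by (intro power_mono) auto
  then have "real_of_int (100 * \<bar>A\<bar>) \<le> real_of_int (M^2)"
    by (simp add: power_mult_distrib)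
  then show "100 * \<bar>A\<bar> \<le> M^2"
    by (simp only: of_int_le_iff)
  have "(5 * root 3 \<bar>real_of_int B\<bar>)^3 \<le> (real_of_int M)^3"
    using assms by (intro power_mono) auto
  then have "real_of_int (125 * \<bar>B\<bar>) \<le> real_of_int (M^3)"
    by (simp add: power_mult_distrib)
  then show "125 * \<bar>B\<bar> \<le> M^3"
    by (simp only: of_int_le_iff)
qed

lemma scaled_coeff_bound:
  fixes A D M x c :: "'a::linordered_idom"
  assumes "0 \<le> D" "0 \<le> M * D" "c * \<bar>A\<bar> \<le> M^n" "M * D \<le> x"
  shows "c * \<bar>D^n * A\<bar> \<le> x^n"
proof -
  have "c * \<bar>D^n * A\<bar> = D^n * (c * \<bar>A\<bar>)"
    using assms(1) by (simp add: abs_mult algebra_simps)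
  also have "\<dots> \<le> D^n * M^n"
    using assms(1,3) by (simp add: mult_left_mono)
  also have "\<dots> = (M * D)^n"
    by (simp add: power_mult_distrib mult.commute)
  also have "\<dots> \<le> x^n"
    using power_mono[OF assms(4,2)] .
  finally show ?thesis .
qed

lemma ln_5_le: "ln 5 \<le> (2.9::real)"
proof -
  have "(2.45::real) \<le> exp 1.45" using exp_ge_add_one_self[of "1.45::real"] by simp
  then have "(2.45::real)^2 \<le> (exp 1.45)^2" by (rule power_mono) simp
  also have "(exp (1.45::real))^2 = exp 2.9" by (simp flip: exp_add add: power2_eq_square)
  finally have "(5::real) \<le> exp 2.9" by (simp add: power2_eq_square)
  then show ?thesis by (metis exp_gt_zero ln_exp ln_le_cancel_iff zero_less_numeral)
qed

theorem lemma3p9: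
  fixes A B M D xP yP xQ yQ :: int
  assumes "4 * A^3 + 27 * B^2 \<noteq> 0"
    and "M > 0"
    and "max (10 * sqrt \<bar>real_of_int A\<bar>) (5 * root 3 \<bar>real_of_int B\<bar>) \<le> real_of_int M"
    and "D > 0" and "squarefree D"
    and "on_curve (of_int (D^2 * A)) (of_int (D^3 * B)) (Some (of_int xP, of_int yP))"
    and "on_curve (of_int (D^2 * A)) (of_int (D^3 * B)) (Some (of_int xQ, of_int yQ))"
    and "M * D \<le> xP" and "xP < xQ"
  shows "ec_height (ec_add (of_int (D^2 * A)) (of_int (D^3 * B))
            (Some (of_int xP, of_int yP)) (Some (of_int xQ, of_int yQ)))
         \<le> ec_height (Some (of_int xP, of_int yP)) + 2 * ec_height (Some (of_int xQ, of_int yQ)) + 2.9"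
proof -
  have "0 < M * D" using assms(2,4) by simp
  then have "0 < xP" using assms(8) by linarith
  have "100 * \<bar>D^2 * A\<bar> \<le> xP^2"
    using coeff_bounds_of_max_root_le(1)[OF assms(3)] assms(4,8) \<open>0 < M * D\<close>
    by (intro scaled_coeff_bound) auto
  moreover have "125 * \<bar>D^3 * B\<bar> \<le> xP^3"
    using coeff_bounds_of_max_root_le(2)[OF assms(3)] assms(4,8) \<open>0 < M * D\<close>
    by (intro scaled_coeff_bound) auto
  ultimately have "ec_height (ec_add (of_int (D^2 * A)) (of_int (D^3 * B))
            (Some (of_int xP, of_int yP)) (Some (of_int xQ, of_int yQ)))
      \<le> ln 5 + ec_height (Some (of_int xP, of_int yP)) + 2 * ec_height (Some (of_int xQ, of_int yQ))"
    using \<open>0 < xP\<close> assms(6,7,9) by (intro ec_height_add_int_points_le) auto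
  then show ?thesis
    using ln_5_le by linarith
qed

end
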